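(* Let $u\in V$ and let $N\subseteq V\setminus\{u\}$ be a nonempty set of vertices, and let $0<\alpha<1$. Suppose that $p_{uv}>0$ and $q^*_{uv}/p_{uv}<\alpha$ for every $v\in N$, and that $Q:=\sum_{v\in N} q^*_{uv}>0$. Put $$\delta=\frac{1-\exp\left(-Q/\alpha\right)}{Q}.$$ Then there is a probability distribution over orderings $\pi$ of $N$ such that, if $\pi$ is drawn from it independently of $G$ and the pairs $\{u,v\}$, $v\in N$, are inspected in the order $\pi$, then for every $v\in N$ the probability that $\{u,v\}$ is the first inspected pair that is an edge of $G$ is at least $\delta\, q^*_{uv}$.
   Context: Let $V$ be a finite vertex set with, for every unordered pair $\{u,v\}$ of distinct vertices, a probability $p_{uv}\in[0,1]$; let $\mathcal D$ be the distribution of the random graph $G$ on $V$ in which each pair $\{u,v\}$ is an edge independently with probability $p_{uv}$. Fix a rule $M$ assigning to every graph $H$ on $V$ a maximum matching $M(H)$ of $H$. Define $q^*_{uv}=\Pr_{H\sim\mathcal D}(\{u,v\}\in M(H))$. *)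

theory Defs
  imports "HOL-Probability.Probability"
begin

definition vpairs :: "'a set \<Rightarrow> 'a set set" where
  "vpairs V = {{x, y} | x y. x \<in> V \<and> y \<in> V \<and> x \<noteq> y}"

text \<open>The random graph D on V: each pair e is an edge independently with probability p e.
  A graph is represented by its edge set.\<close>
definition random_graph :: "'a set \<Rightarrow> ('a set \<Rightarrow> real) \<Rightarrow> 'a set set pmf" where
  "random_graph V p =
     map_pmf (\<lambda>b. {e \<in> vpairs V. b e}) (Pi_pmf (vpairs V) False (\<lambda>e. bernoulli_pmf (p e)))"

definition is_matching :: "'a set set \<Rightarrow> 'a set set \<Rightarrow> bool" where
  "is_matching H M \<longleftrightarrow> M \<subseteq> H \<and> (\<forall>e\<in>M. \<forall>f\<in>M. e \<noteq> f \<longrightarrow> e \<inter> f = {})"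

definition is_max_matching :: "'a set set \<Rightarrow> 'a set set \<Rightarrow> bool" where
  "is_max_matching H M \<longleftrightarrow> is_matching H M \<and> (\<forall>M'. is_matching H M' \<longrightarrow> card M' \<le> card M)"

definition qstar :: "'a set \<Rightarrow> ('a set \<Rightarrow> real) \<Rightarrow> ('a set set \<Rightarrow> 'a set set) \<Rightarrow> 'a set \<Rightarrow> real" where
  "qstar V p M e = measure_pmf.prob (random_graph V p) {H. e \<in> M H}"

definition orderings :: "'a set \<Rightarrow> 'a list set" where
  "orderings N = {xs. distinct xs \<and> set xs = N}"

definition first_edge :: "'a \<Rightarrow> 'a list \<Rightarrow> 'a set set \<Rightarrow> 'a option" where
  "first_edge u xs H = find (\<lambda>w. {u, w} \<in> H) xs"

end

theory Submission
  imports Defs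
begin

(* Put x_w = q*_{uw} / alpha and y = sum_{w in N} x_w = Q / alpha.  The hypothesis
   q*_{uw} / p_{uw} < alpha says exactly x_w < p_{uw}, and the claimed bound is
   x_v (1 - e^{-y}) / y.  In continuous time one would give each pair {u,w} a random arrival time,
   tuned so that "arrived and present" happens at rate x_w, and inspect the pairs in order of
   arrival; over a time horizon T >= 1, v is then first with probability at least
   integral_0^1 x_v e^{-y t} dt = x_v (1 - e^{-y}) / y.  We discretise this: each w independently
   draws an arrival step k_w in {0..K} from an explicit truncated geometric law (arrival_pmf),
   which is a genuine distribution as long as 1 - e^{-x_w T} <= p_{uw} for the horizon T = K d;
   the ordering is N stably sorted by arrival step (arrival_order).  Vertex v is found first as soon
   as it arrives at some step j, {u,v} is present, and every other vertex arriving no later is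
   absent; these events are disjoint in j and their probabilities form a geometric sum, which an
   elementary estimate bounds below by x_v (1 - e^{-y}) / y once K is large. *)

lemma measure_pair_pmf_as_expectation:
  fixes A :: "'a pmf" and B :: "'b pmf" and g :: "'a \<Rightarrow> real"
  assumes slices: "\<And>a. measure_pmf.prob B {b. (a, b) \<in> E} = g a"
    and int: "integrable (measure_pmf A) g"
  shows "measure_pmf.prob (pair_pmf A B) E = measure_pmf.expectation A g"
proof -
  have g_nonneg: "0 \<le> g a" for a
    using slices by (metis measure_nonneg)
  have "ennreal (measure_pmf.prob (pair_pmf A B) E) = (\<integral>\<^sup>+x. indicator E x \<partial>pair_pmf A B)"
    by (simp add: measure_pmf.emeasure_eq_measure)
  also have "\<dots> = (\<integral>\<^sup>+a. \<integral>\<^sup>+b. indicator {b. (a, b) \<in> E} b \<partial>B \<partial>A)"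
    unfolding nn_integral_pair_pmf'
    by (intro nn_integral_cong) (auto split: split_indicator)
  also have "\<dots> = (\<integral>\<^sup>+a. ennreal (g a) \<partial>A)"
    by (simp add: measure_pmf.emeasure_eq_measure slices)
  also have "\<dots> = ennreal (measure_pmf.expectation A g)"
    by (intro nn_integral_eq_integral int) (auto simp: g_nonneg)
  finally show ?thesis
    by (simp add: Bochner_Integration.integral_nonneg g_nonneg)
qed

lemma find_sort_key:
  fixes k :: "'a \<Rightarrow> 'b :: linorder"
  assumes "v \<in> set xs" "distinct xs" "P v"
    and "\<And>w. w \<in> set xs \<Longrightarrow> w \<noteq> v \<Longrightarrow> k w \<le> k v \<Longrightarrow> \<not> P w"
  shows "find P (sort_key k xs) = Some v"
proof -
  have "v \<in> set (sort_key k xs)" using assms(1) by simp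
  then obtain as bs where split: "sort_key k xs = as @ v # bs" by (meson split_list)
  have "\<not> P w" if w: "w \<in> set as" for w
  proof (rule assms(4))
    have "distinct (sort_key k xs)" using assms(2) by simp
    then show "w \<noteq> v" using split w by auto
    show "w \<in> set xs" using split w by (metis Un_iff set_append set_sort)
    have "sorted (map k (sort_key k xs))" by simp
    then show "k w \<le> k v" using split w by (auto simp: sorted_append)
  qed
  then have "find P (as @ v # bs) = Some v"
    using assms(3) by (induction as) auto
  then show ?thesis using split by simp
qed

lemma measure_Pi_bernoulli_pattern:
  fixes p :: "'i \<Rightarrow> real"
  assumes I: "finite I" and e0: "e0 \<in> I" and F: "F \<subseteq> I" "e0 \<notin> F"
    and p: "\<forall>e\<in>I. 0 \<le> p e \<and> p e \<le> 1"
  shows "measure_pmf.prob (Pi_pmf I False (\<lambda>e. bernoulli_pmf (p e))) {b. b e0 \<and> (\<forall>e\<in>F. \<not> b e)}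
       = p e0 * (\<Prod>e\<in>F. 1 - p e)"
proof -
  define B where "B e = (if e = e0 then {True} else if e \<in> F then {False} else UNIV)" for e
  let ?P = "\<lambda>e. measure_pmf.prob (bernoulli_pmf (p e)) (B e)"
  have "{b. b e0 \<and> (\<forall>e\<in>F. \<not> b e)} = Pi I B"
    using e0 F by (auto simp: B_def Pi_def)
  then have "measure_pmf.prob (Pi_pmf I False (\<lambda>e. bernoulli_pmf (p e))) {b. b e0 \<and> (\<forall>e\<in>F. \<not> b e)}
      = (\<Prod>e\<in>I. ?P e)"
    by (simp add: measure_Pi_pmf_Pi I)
  also have "\<dots> = (\<Prod>e\<in>insert e0 F. ?P e)"
    using I e0 F by (intro prod.mono_neutral_right) (auto simp: B_def)
  also have "\<dots> = ?P e0 * (\<Prod>e\<in>F. ?P e)"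
    using I F by (simp add: finite_subset)
  also have "\<dots> = p e0 * (\<Prod>e\<in>F. 1 - p e)"
    using e0 F p by (auto simp: B_def measure_pmf_single intro!: prod.cong)
  finally show ?thesis .
qed

(* It is
   chosen so that "arrived by step j and edge present" has probability exactly 1 - a^(j+1). *)
definition arrival_weight :: "nat \<Rightarrow> real \<Rightarrow> real \<Rightarrow> nat \<Rightarrow> real" where
  "arrival_weight K a p i =
     (if i < K then (a ^ i - a ^ Suc i) / p else if i = K then 1 - (1 - a ^ K) / p else 0)"

definition arrival_pmf :: "nat \<Rightarrow> real \<Rightarrow> real \<Rightarrow> nat pmf" where
  "arrival_pmf K a p = embed_pmf (arrival_weight K a p)"

(* Conditions making arrival_weight a probability distribution: the horizon K must be short
   enough that the total weight 1 - a^K of the proper steps does not exceed p. *)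
locale arrival =
  fixes K :: nat and a p :: real
  assumes a_pos: "0 < a" and a_le_1: "a \<le> 1" and p_pos: "0 < p" and horizon: "1 - a ^ K \<le> p"
begin

lemma arrival_weight_nonneg: "0 \<le> arrival_weight K a p i"
proof -
  have "a ^ Suc i \<le> a ^ i" using a_pos a_le_1 by (simp add: mult_left_le_one_le)
  moreover have "(1 - a ^ K) / p \<le> 1" using horizon p_pos by simp
  ultimately show ?thesis using p_pos by (auto simp: arrival_weight_def)
qed

lemma arrival_weight_partial_sum: "j < K \<Longrightarrow> (\<Sum>i\<le>j. arrival_weight K a p i) = (1 - a ^ Suc j) / p"
proof -
  assume "j < K"
  then have "(\<Sum>i\<le>j. arrival_weight K a p i) = (\<Sum>i<Suc j. a ^ i - a ^ Suc i) / p"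
    by (simp add: arrival_weight_def lessThan_Suc_atMost sum_divide_distrib)
  also have "\<dots> = (1 - a ^ Suc j) / p"
    using sum_lessThan_telescope'[of "\<lambda>i. a ^ i" "Suc j"] by simp
  finally show ?thesis .
qed

lemma arrival_weight_sum: "(\<Sum>i\<le>K. arrival_weight K a p i) = 1"
proof (cases K)
  case 0
  then show ?thesis by (simp add: arrival_weight_def)
next
  case (Suc j)
  then have "(\<Sum>i\<le>K. arrival_weight K a p i) = (1 - a ^ K) / p + arrival_weight K a p K"
    using arrival_weight_partial_sum[of j] by simp
  then show ?thesis by (simp add: arrival_weight_def)
qed

lemma pmf_arrival: "pmf (arrival_pmf K a p) i = arrival_weight K a p i"
  unfolding arrival_pmf_def
proof (rule pmf_embed_pmf)
  show "0 \<le> arrival_weight K a p i" for i by (rule arrival_weight_nonneg)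
  have "(\<integral>\<^sup>+i. ennreal (arrival_weight K a p i) \<partial>count_space UNIV)
      = (\<Sum>i\<le>K. ennreal (arrival_weight K a p i))"
    by (intro nn_integral_count_space') (auto simp: arrival_weight_def)
  also have "\<dots> = 1"
    by (simp add: sum_ennreal arrival_weight_nonneg arrival_weight_sum)
  finally show "(\<integral>\<^sup>+i. ennreal (arrival_weight K a p i) \<partial>count_space UNIV) = 1" .
qed

lemma set_arrival_pmf: "set_pmf (arrival_pmf K a p) \<subseteq> {..K}"
  by (auto simp: set_pmf_eq pmf_arrival arrival_weight_def split: if_splits)

lemma expectation_arrival:
  "measure_pmf.expectation (arrival_pmf K a p) f = (\<Sum>i\<le>K. arrival_weight K a p i * f i)"
  by (subst integral_measure_pmf[of "{..K}"]) (use set_arrival_pmf in \<open>auto simp: pmf_arrival\<close>)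

lemma integrable_arrival: "integrable (measure_pmf (arrival_pmf K a p)) (f :: nat \<Rightarrow> real)"
  by (rule integrable_measure_pmf_finite) (meson finite_atMost finite_subset set_arrival_pmf)

(* The two expectations that enter the event probability: the arriving vertex at step j with
   its edge present, and any other vertex not blocking up to step j. *)
lemma expectation_arrival_at:
  assumes j: "j < K"
  shows "measure_pmf.expectation (arrival_pmf K a p) (\<lambda>t. if t = j then p else 0) = a ^ j - a ^ Suc j"
proof -
  have "measure_pmf.expectation (arrival_pmf K a p) (\<lambda>t. if t = j then p else 0)
      = (\<Sum>i\<le>K. if i = j then arrival_weight K a p j * p else 0)"
    unfolding expectation_arrival by (intro sum.cong) auto
  also have "\<dots> = arrival_weight K a p j * p" using j by simp
  finally show ?thesis using j p_pos by (simp add: arrival_weight_def)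
qed

lemma expectation_arrival_survival:
  assumes j: "j < K"
  shows "measure_pmf.expectation (arrival_pmf K a p) (\<lambda>t. if t \<le> j then 1 - p else 1) = a ^ Suc j"
proof -
  have "measure_pmf.expectation (arrival_pmf K a p) (\<lambda>t. if t \<le> j then 1 - p else 1)
      = (\<Sum>i\<le>K. arrival_weight K a p i - p * (if i \<in> {..j} then arrival_weight K a p i else 0))"
    unfolding expectation_arrival by (intro sum.cong) (auto simp: algebra_simps)
  also have "\<dots> = 1 - p * (\<Sum>i\<in>{..K} \<inter> {..j}. arrival_weight K a p i)"
    by (simp only: sum_subtractf sum_distrib_left[symmetric] sum.inter_restrict[OF finite_atMost]
          arrival_weight_sum)
  also have "{..K} \<inter> {..j} = {..j}" using j by auto
  finally show ?thesis
    using j p_pos by (simp add: arrival_weight_partial_sum)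
qed

end

lemma arrival_exponential:
  fixes x d p :: real
  assumes x: "0 \<le> x" and d: "0 \<le> d" and horizon: "x * (K * d) < p"
  shows "arrival K (exp (-x * d)) p"
proof
  show "0 < exp (-x * d)" by simp
  show "exp (-x * d) \<le> 1" using x d by simp
  have "0 \<le> x * (K * d)" using x d by simp
  then show "0 < p" using horizon by linarith
  have "exp (-x * d) ^ K = exp (-(x * (K * d)))"
    by (simp flip: exp_of_nat_mult)
  then show "1 - exp (-x * d) ^ K \<le> p"
    using exp_ge_add_one_self[of "-(x * (K * d))"] horizon by linarith
qed

lemma finite_vpairs: "finite V \<Longrightarrow> finite (vpairs V)"
  by (rule finite_subset[of _ "Pow V"]) (auto simp: vpairs_def)

lemma upair_in_vpairs: "u \<in> V \<Longrightarrow> w \<in> V \<Longrightarrow> u \<noteq> w \<Longrightarrow> {u, w} \<in> vpairs V"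
  by (auto simp: vpairs_def)

lemma measure_edges_first_at_step:
  fixes k :: "'a \<Rightarrow> nat"
  assumes V: "finite V" and p: "\<forall>e\<in>vpairs V. 0 \<le> p e \<and> p e \<le> 1"
    and u: "u \<in> V" and N: "N \<subseteq> V - {u}" and v: "v \<in> N"
  shows "measure_pmf.prob (Pi_pmf (vpairs V) False (\<lambda>e. bernoulli_pmf (p e)))
           {b. k v = j \<and> b {u, v} \<and> (\<forall>w\<in>N - {v}. k w \<le> j \<longrightarrow> \<not> b {u, w})}
         = (\<Prod>w\<in>N. if w = v then (if k w = j then p {u, w} else 0)
                    else (if k w \<le> j then 1 - p {u, w} else 1))"
proof -
  have finN: "finite N" using finite_subset[OF N] V by blast
  show ?thesis
  proof (cases "k v = j")
    case False
    have "(\<Prod>w\<in>N. if w = v then (if k w = j then p {u, w} else 0)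
                      else (if k w \<le> j then 1 - p {u, w} else 1)) = 0"
      using v finN False by (intro prod_zero) auto
    then show ?thesis using False by simp
  next
    case True
    have uw: "{u, w} \<in> vpairs V" if "w \<in> N" for w
      using that N u by (auto intro: upair_in_vpairs)
    define S where "S = {w \<in> N - {v}. k w \<le> j}"
    have "{b. k v = j \<and> b {u, v} \<and> (\<forall>w\<in>N - {v}. k w \<le> j \<longrightarrow> \<not> b {u, w})}
        = {b. b {u, v} \<and> (\<forall>e\<in>(\<lambda>w. {u, w}) ` S. \<not> b e)}"
      using True by (auto simp: S_def)
    also have "measure_pmf.prob (Pi_pmf (vpairs V) False (\<lambda>e. bernoulli_pmf (p e))) \<dots>
        = p {u, v} * (\<Prod>e\<in>(\<lambda>w. {u, w}) ` S. 1 - p e)"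
      using V v uw p by (intro measure_Pi_bernoulli_pattern)
        (auto simp: finite_vpairs S_def doubleton_eq_iff)
    also have "(\<Prod>e\<in>(\<lambda>w. {u, w}) ` S. 1 - p e) = (\<Prod>w\<in>S. 1 - p {u, w})"
      by (subst prod.reindex) (auto simp: inj_on_def doubleton_eq_iff)
    also have "\<dots> = (\<Prod>w\<in>N - {v}. if k w \<le> j then 1 - p {u, w} else 1)"
      unfolding S_def using finN by (intro prod.inter_filter) simp
    finally show ?thesis
      using True v finN by (auto simp: prod.remove intro!: prod.cong)
  qed
qed

lemma measure_first_arrival_event:
  fixes a :: "'a \<Rightarrow> real"
  assumes V: "finite V" and p: "\<forall>e\<in>vpairs V. 0 \<le> p e \<and> p e \<le> 1"
    and u: "u \<in> V" and N: "N \<subseteq> V - {u}" and v: "v \<in> N"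
    and arrivals: "\<forall>w\<in>N. arrival K (a w) (p {u, w})" and j: "j < K"
  shows "measure_pmf.prob (pair_pmf (Pi_pmf N 0 (\<lambda>w. arrival_pmf K (a w) (p {u, w})))
                                     (Pi_pmf (vpairs V) False (\<lambda>e. bernoulli_pmf (p e))))
           {(k, b). k v = j \<and> b {u, v} \<and> (\<forall>w\<in>N - {v}. k w \<le> j \<longrightarrow> \<not> b {u, w})}
         = (a v ^ j - a v ^ Suc j) * (\<Prod>w\<in>N - {v}. a w) ^ Suc j"
proof -
  define f where "f w t = (if w = v then (if t = j then p {u, w} else 0)
                           else (if t \<le> j then 1 - p {u, w} else 1))" for w t
  let ?A = "\<lambda>w. arrival_pmf K (a w) (p {u, w})"
  have finN: "finite N" using finite_subset[OF N] V by blast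
  have p_uw: "0 \<le> p {u, w} \<and> p {u, w} \<le> 1" if "w \<in> N" for w
    using p that N u by (auto intro: upair_in_vpairs)
  have integrable: "integrable (measure_pmf (?A w)) g" if "w \<in> N" for w and g :: "nat \<Rightarrow> real"
    using arrivals that by (auto intro: arrival.integrable_arrival)
  have "measure_pmf.prob (pair_pmf (Pi_pmf N 0 ?A) (Pi_pmf (vpairs V) False (\<lambda>e. bernoulli_pmf (p e))))
          {(k, b). k v = j \<and> b {u, v} \<and> (\<forall>w\<in>N - {v}. k w \<le> j \<longrightarrow> \<not> b {u, w})}
      = measure_pmf.expectation (Pi_pmf N 0 ?A) (\<lambda>k. \<Prod>w\<in>N. f w (k w))"
    using measure_edges_first_at_step[OF V p u N v] finN integrable
    by (intro measure_pair_pmf_as_expectation integrable_prod_Pi_pmf) (simp_all add: f_def)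
  also have "\<dots> = (\<Prod>w\<in>N. measure_pmf.expectation (?A w) (f w))"
    using finN integrable p_uw by (intro expectation_prod_Pi_pmf) (auto simp: f_def)
  also have "\<dots> = measure_pmf.expectation (?A v) (f v)
                  * (\<Prod>w\<in>N - {v}. measure_pmf.expectation (?A w) (f w))"
    using finN v by (simp add: prod.remove)
  also have "measure_pmf.expectation (?A v) (f v) = a v ^ j - a v ^ Suc j"
    using arrivals v j arrival.expectation_arrival_at by (fastforce simp: f_def[abs_def])
  also have "(\<Prod>w\<in>N - {v}. measure_pmf.expectation (?A w) (f w)) = (\<Prod>w\<in>N - {v}. a w ^ Suc j)"
  proof (intro prod.cong refl)
    fix w assume w: "w \<in> N - {v}"
    then have "f w = (\<lambda>t. if t \<le> j then 1 - p {u, w} else 1)" by (auto simp: f_def)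
    then show "measure_pmf.expectation (?A w) (f w) = a w ^ Suc j"
      using arrivals w j arrival.expectation_arrival_survival by auto
  qed
  finally show ?thesis by (simp only: prod_power_distrib)
qed

definition arrival_order :: "nat \<Rightarrow> ('a \<Rightarrow> real) \<Rightarrow> ('a \<Rightarrow> real) \<Rightarrow> 'a list \<Rightarrow> 'a list pmf" where
  "arrival_order K a P xs =
     map_pmf (\<lambda>k. sort_key k xs) (Pi_pmf (set xs) 0 (\<lambda>w. arrival_pmf K (a w) (P w)))"

lemma set_arrival_order: "distinct xs \<Longrightarrow> set_pmf (arrival_order K a P xs) \<subseteq> orderings (set xs)"
  by (auto simp: arrival_order_def orderings_def)

(* The winning events at the steps j < K are disjoint and each makes {u,v} the first inspected
   edge, so their total probability bounds the probability that v is found first. *)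
lemma first_edge_arrival_order:
  fixes a :: "'a \<Rightarrow> real"
  assumes V: "finite V" and p: "\<forall>e\<in>vpairs V. 0 \<le> p e \<and> p e \<le> 1"
    and u: "u \<in> V" and N: "N \<subseteq> V - {u}" and xs: "distinct xs" "set xs = N"
    and arrivals: "\<forall>w\<in>N. arrival K (a w) (p {u, w})" and v: "v \<in> N"
  shows "(\<Sum>j<K. (a v ^ j - a v ^ Suc j) * (\<Prod>w\<in>N - {v}. a w) ^ Suc j)
     \<le> measure_pmf.prob (pair_pmf (arrival_order K a (\<lambda>w. p {u, w}) xs) (random_graph V p))
           {(ys, H). first_edge u ys H = Some v}"
proof -
  define KP where "KP = Pi_pmf N 0 (\<lambda>w. arrival_pmf K (a w) (p {u, w}))"
  define Bits where "Bits = Pi_pmf (vpairs V) False (\<lambda>e. bernoulli_pmf (p e))"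
  define graph where "graph b = {e \<in> vpairs V. b e}" for b :: "'a set \<Rightarrow> bool"
  define \<Phi> where "\<Phi> = (\<lambda>(k :: 'a \<Rightarrow> nat, b). (sort_key k xs, graph b))"
  define E where "E j = {(k :: 'a \<Rightarrow> nat, b). k v = j \<and> b {u, v} \<and>
                          (\<forall>w\<in>N - {v}. k w \<le> j \<longrightarrow> \<not> b {u, w})}" for j
  define X where "X = {(ys, H). first_edge u ys H = Some v}"
  have pair: "pair_pmf (arrival_order K a (\<lambda>w. p {u, w}) xs) (random_graph V p)
      = map_pmf \<Phi> (pair_pmf KP Bits)"
    by (simp add: arrival_order_def random_graph_def KP_def Bits_def graph_def \<Phi>_def xs map_pair)
  have first: "(\<Union>j<K. E j) \<subseteq> \<Phi> -` X"
  proof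
    fix z assume "z \<in> (\<Union>j<K. E j)"
    then obtain k b where z: "z = (k, b)" and bv: "b {u, v}"
      and bw: "\<forall>w\<in>N - {v}. k w \<le> k v \<longrightarrow> \<not> b {u, w}"
      by (auto simp: E_def)
    have "find (\<lambda>w. {u, w} \<in> graph b) (sort_key k xs) = Some v"
      using xs v bv bw N u by (intro find_sort_key) (auto simp: graph_def intro: upair_in_vpairs)
    then show "z \<in> \<Phi> -` X" by (simp add: z \<Phi>_def X_def first_edge_def)
  qed
  have "(\<Sum>j<K. (a v ^ j - a v ^ Suc j) * (\<Prod>w\<in>N - {v}. a w) ^ Suc j)
      = (\<Sum>j<K. measure_pmf.prob (pair_pmf KP Bits) (E j))"
    using measure_first_arrival_event[OF V p u N v arrivals]
    by (simp add: KP_def Bits_def E_def)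
  also have "\<dots> = measure_pmf.prob (pair_pmf KP Bits) (\<Union>j<K. E j)"
    by (intro measure_pmf.finite_measure_finite_Union[symmetric])
       (auto simp: disjoint_family_on_def E_def)
  also have "\<dots> \<le> measure_pmf.prob (pair_pmf KP Bits) (\<Phi> -` X)"
    by (intro measure_pmf.finite_measure_mono first) simp
  finally show ?thesis by (simp add: pair X_def)
qed

lemma exp_arrival_sum_bound:
  fixes x y d :: real and K :: nat
  assumes x: "0 \<le> x" and y: "0 < y" and d: "0 < d"
    and step: "1 - exp (-y) \<le> exp (-y*d) * (1 - exp (-y*(K*d)))"
  shows "x * (1 - exp (-y)) / y
       \<le> (\<Sum>j<K. (exp (-x*d) ^ j - exp (-x*d) ^ Suc j) * exp (-(y-x)*d) ^ Suc j)"
proof -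
  define r where "r = exp (-y*d)"
  have r0: "0 < r" and r1: "r < 1" using y d by (auto simp: r_def)
  have summand: "(exp (-x*d) ^ j - exp (-x*d) ^ Suc j) * exp (-(y-x)*d) ^ Suc j
      = (exp (x*d) - 1) * r ^ Suc j" for j
  proof -
    have "exp (-x*d) ^ j * exp (-(y-x)*d) ^ Suc j = r ^ Suc j * exp (x*d)"
      by (simp add: r_def flip: exp_of_nat_mult exp_add) (simp add: algebra_simps)
    moreover have "exp (-x*d) ^ Suc j * exp (-(y-x)*d) ^ Suc j = r ^ Suc j"
      by (simp add: r_def flip: exp_of_nat_mult exp_add power_mult_distrib) (simp add: algebra_simps)
    ultimately show ?thesis by (simp add: algebra_simps)
  qed
  have geometric: "(\<Sum>j<K. r ^ Suc j) = r * (1 - r ^ K) / (1 - r)"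
    using r1 by (simp add: sum_distrib_left[symmetric] sum_gp_strict)
  have rK: "r ^ K = exp (-y*(K*d))"
    by (simp add: r_def flip: exp_of_nat_mult)
  have step': "1 - exp (-y) \<le> r * (1 - r ^ K)"
    using step unfolding rK unfolding r_def .
  have tail_nonneg: "0 \<le> r * (1 - r ^ K)" using r0 r1 by (simp add: power_le_one)
  have "1 - r \<le> y*d" using exp_ge_add_one_self[of "-y*d"] by (simp add: r_def)
  then have ratio: "r * (1 - r ^ K) / (y*d) \<le> r * (1 - r ^ K) / (1 - r)"
    using r1 tail_nonneg by (intro divide_left_mono) (auto intro: mult_pos_pos y d)
  have "x * (1 - exp (-y)) / y \<le> x * (r * (1 - r ^ K)) / y"
    using step' x y by (intro divide_right_mono mult_left_mono) auto
  also have "\<dots> = (x*d) * (r * (1 - r ^ K) / (y*d))" using d y by (simp add: field_simps)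
  also have "\<dots> \<le> (exp (x*d) - 1) * (r * (1 - r ^ K) / (1 - r))"
  proof (rule mult_mono)
    show "x*d \<le> exp (x*d) - 1" using exp_ge_add_one_self[of "x*d"] by linarith
  qed (use ratio x d tail_nonneg y in auto)
  also have "\<dots> = (\<Sum>j<K. (exp (-x*d) ^ j - exp (-x*d) ^ Suc j) * exp (-(y-x)*d) ^ Suc j)"
    by (simp only: summand sum_distrib_left[symmetric] geometric)
  finally show ?thesis .
qed

lemma exists_step_count:
  fixes y T :: real
  assumes y: "0 < y" and T: "1 < T"
  shows "\<exists>K::nat. K > 0 \<and> 1 - exp (-y) < exp (-y*(T/K)) * (1 - exp (-y*T))"
proof -
  have "(\<lambda>K::nat. exp (-y*(T/K)) * (1 - exp (-y*T))) \<longlonglongrightarrow> exp (-y*0) * (1 - exp (-y*T))"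
    by (intro tendsto_intros)
  moreover have "1 - exp (-y) < exp (-y*0) * (1 - exp (-y*T))" using y T by simp
  ultimately have "\<forall>\<^sub>F K in sequentially. 1 - exp (-y) < exp (-y*(T/K)) * (1 - exp (-y*T))"
    by (rule order_tendstoD)
  then have "\<forall>\<^sub>F K in sequentially. 0 < K \<and> 1 - exp (-y) < exp (-y*(T/K)) * (1 - exp (-y*T))"
    by (intro eventually_conj eventually_gt_at_top)
  then show ?thesis by (auto dest: eventually_happens'[OF sequentially_bot])
qed

lemma exists_horizon:
  fixes x P :: "'a \<Rightarrow> real"
  assumes "finite N" and "\<forall>w\<in>N. x w < P w"
  shows "\<exists>T>1. \<forall>w\<in>N. x w * T < P w"
proof -
  have "\<forall>w\<in>N. \<forall>\<^sub>F T in at_right 1. x w * T < P w"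
  proof
    fix w assume "w \<in> N"
    moreover have "((\<lambda>T. x w * T) \<longlongrightarrow> x w * 1) (at_right 1)" by (intro tendsto_intros)
    ultimately show "\<forall>\<^sub>F T in at_right 1. x w * T < P w"
      using assms(2) by (auto intro: order_tendstoD)
  qed
  then have "\<forall>\<^sub>F T in at_right (1::real). 1 < T \<and> (\<forall>w\<in>N. x w * T < P w)"
    using assms(1) by (intro eventually_conj eventually_at_right_less eventually_ball_finite)
  then show ?thesis by (rule eventually_happens'[rotated]) simp
qed

theorem random_order_first_edge:
  fixes x :: "'a \<Rightarrow> real"
  assumes V: "finite V" and p: "\<forall>e\<in>vpairs V. 0 \<le> p e \<and> p e \<le> 1"
    and u: "u \<in> V" and N: "N \<subseteq> V - {u}"
    and x: "\<forall>w\<in>N. 0 \<le> x w \<and> x w < p {u, w}" and y: "0 < (\<Sum>w\<in>N. x w)"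
  shows "\<exists>\<sigma>. set_pmf \<sigma> \<subseteq> orderings N \<and>
           (\<forall>v\<in>N. x v * (1 - exp (-(\<Sum>w\<in>N. x w))) / (\<Sum>w\<in>N. x w)
                  \<le> measure_pmf.prob (pair_pmf \<sigma> (random_graph V p))
                       {(xs, H). first_edge u xs H = Some v})"
proof -
  define y where "y = (\<Sum>w\<in>N. x w)"
  have finN: "finite N" using finite_subset[OF N] V by blast
  have below_p: "\<forall>w\<in>N. x w < p {u, w}" using x by blast
  obtain T where T: "1 < T" and xT: "\<forall>w\<in>N. x w * T < p {u, w}"
    using exists_horizon[OF finN below_p] by blast
  obtain K :: nat where K: "K > 0" and step: "1 - exp (-y) < exp (-y*(T/K)) * (1 - exp (-y*T))"
    using exists_step_count[OF y[folded y_def] T] by auto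
  define d where "d = T / K"
  have d: "0 < d" and Kd: "K * d = T" using K T by (auto simp: d_def)
  define a where "a w = exp (-x w * d)" for w
  have arrivals: "\<forall>w\<in>N. arrival K (a w) (p {u, w})"
    unfolding a_def using x xT d by (intro ballI arrival_exponential) (auto simp: Kd)
  obtain xs where xs: "distinct xs" "set xs = N" using finite_distinct_list[OF finN] by blast
  show ?thesis
  proof (intro exI conjI ballI)
    show "set_pmf (arrival_order K a (\<lambda>w. p {u, w}) xs) \<subseteq> orderings N"
      using set_arrival_order[OF xs(1)] xs(2) by simp
  next
    fix v assume v: "v \<in> N"
    have "(\<Sum>w\<in>N - {v}. -x w * d) = -(\<Sum>w\<in>N - {v}. x w) * d"
      by (simp add: sum_negf sum_distrib_right)
    also have "(\<Sum>w\<in>N - {v}. x w) = y - x v" using finN v by (simp add: y_def sum_diff1)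
    finally have others: "(\<Prod>w\<in>N - {v}. a w) = exp (-(y - x v) * d)"
      using finN by (simp add: a_def flip: exp_sum)
    have "x v * (1 - exp (-y)) / y
        \<le> (\<Sum>j<K. (exp (-x v * d) ^ j - exp (-x v * d) ^ Suc j) * exp (-(y - x v)*d) ^ Suc j)"
      using x v y step Kd d by (intro exp_arrival_sum_bound) (auto simp: y_def d_def)
    also have "\<dots> \<le> measure_pmf.prob (pair_pmf (arrival_order K a (\<lambda>w. p {u, w}) xs) (random_graph V p))
                      {(xs, H). first_edge u xs H = Some v}"
      using first_edge_arrival_order[OF V p u N xs arrivals v] unfolding others a_def[of v] .
    finally show "x v * (1 - exp (-(\<Sum>w\<in>N. x w))) / (\<Sum>w\<in>N. x w) \<le> \<dots>"
      by (simp add: y_def)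
  qed
qed

theorem corollary1:
  fixes V :: "'a set" and p :: "'a set \<Rightarrow> real" and M :: "'a set set \<Rightarrow> 'a set set"
    and u :: 'a and N :: "'a set" and \<alpha> :: real
  assumes "finite V"
    and "\<forall>e\<in>vpairs V. 0 \<le> p e \<and> p e \<le> 1"
    and "\<forall>H. H \<subseteq> vpairs V \<longrightarrow> is_max_matching H (M H)"
    and "u \<in> V" and "N \<subseteq> V - {u}" and "N \<noteq> {}"
    and "0 < \<alpha>" and "\<alpha> < 1"
    and "\<forall>v\<in>N. 0 < p {u, v} \<and> qstar V p M {u, v} / p {u, v} < \<alpha>"
    and "0 < (\<Sum>v\<in>N. qstar V p M {u, v})"
  shows "\<exists>\<sigma> :: 'a list pmf. set_pmf \<sigma> \<subseteq> orderings N \<and>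
           (\<forall>v\<in>N. measure_pmf.prob (pair_pmf \<sigma> (random_graph V p))
                      {(xs, H). first_edge u xs H = Some v}
                  \<ge> (let Q = (\<Sum>w\<in>N. qstar V p M {u, w}) in (1 - exp (- Q / \<alpha>)) / Q)
                      * qstar V p M {u, v})"
proof -
  define x where "x w = qstar V p M {u, w} / \<alpha>" for w
  have x: "\<forall>w\<in>N. 0 \<le> x w \<and> x w < p {u, w}"
    using assms(7,9) by (auto simp: x_def qstar_def divide_less_eq mult.commute)
  have Q: "(\<Sum>w\<in>N. qstar V p M {u, w}) = \<alpha> * (\<Sum>w\<in>N. x w)"
    using assms(7) by (simp add: x_def flip: sum_divide_distrib)
  have y: "0 < (\<Sum>w\<in>N. x w)"
    using assms(7,10) by (simp add: Q zero_less_mult_iff)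
  have bound: "(let Q = (\<Sum>w\<in>N. qstar V p M {u, w}) in (1 - exp (- Q / \<alpha>)) / Q) * qstar V p M {u, v}
      = x v * (1 - exp (-(\<Sum>w\<in>N. x w))) / (\<Sum>w\<in>N. x w)" for v
    using assms(7) by (simp add: Q x_def field_simps)
  show ?thesis
    using random_order_first_edge[OF assms(1,2,4,5) x y] by (simp only: bound)
qed

end
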